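(* Let $\Lambda$ be a finite set of multicompositions of $n$ with $\omega\in\Lambda$ and $\Lambda^+\subseteq\Lambda$. Then $$\mathscr S(\Lambda)\cong\operatorname{End}_{\mathscr H}\Big(\bigoplus_{\lambda\in\Lambda}M^\lambda\Big)\quad\text{and}\quad\mathscr H\cong\operatorname{End}_{\mathscr S(\Lambda)}\Big(\bigoplus_{\lambda\in\Lambda}M^\lambda\Big),$$ where $\bigoplus_{\lambda\in\Lambda}M^\lambda$ is regarded as an $(\mathscr S(\Lambda),\mathscr H)$-bimodule.
   Context: $R$ is an integral domain and $\mathscr H$ is the Ariki–Koike algebra over $R$ with parameters $q$ (invertible), $Q_1,\dots,Q_r$. For a multicomposition $\mu$, $M^\mu=m_\mu\mathscr H$, where $m_\mu=x_\mu u^+_\mu$, $x_\mu=\sum_{w\in\mathfrak S_\mu}T_w$ and $u^+_\mu=\prod_{s=2}^r\prod_{k=1}^{|\mu^{(1)}|+\dots+|\mu^{(s-1)}|}(L_k-Q_s)$, $L_k=q^{1-k}T_{k-1}\cdots T_1T_0T_1\cdots T_{k-1}$. The cyclotomic $q$-Schur algebra is $\mathscr S(\Lambda)=\operatorname{End}_{\mathscr H}(\bigoplus_{\mu\in\Lambda}M^\mu)$, acting on the left of $\bigoplus_\mu M^\mu$; $\Lambda^+$ is the set of multipartitions of $n$ dominating some element of $\Lambda$ in the dominance order; $\omega=((0),\dots,(0),(1^n))$, so $M^\omega=\mathscr H$. *)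

theory Defs
  imports "HOL-Algebra.QuotRing" "HOL-Library.FuncSet"
begin

text \<open>Elements: finitely supported functions from words (lists of generator indices
  below n) to R.  Multiplication is concatenation-convolution.\<close>

definition fa_carrier :: "nat \<Rightarrow> (nat list \<Rightarrow> 'r::idom) set" where
  "fa_carrier n = {f. finite {w. f w \<noteq> 0} \<and> (\<forall>w. f w \<noteq> 0 \<longrightarrow> set w \<subseteq> {..<n})}"

definition fa_mult :: "(nat list \<Rightarrow> 'r::idom) \<Rightarrow> (nat list \<Rightarrow> 'r) \<Rightarrow> nat list \<Rightarrow> 'r" where
  "fa_mult f g = (\<lambda>w. \<Sum>k\<in>{0..length w}. f (take k w) * g (drop k w))"

definition fa_add :: "(nat list \<Rightarrow> 'r::idom) \<Rightarrow> (nat list \<Rightarrow> 'r) \<Rightarrow> nat list \<Rightarrow> 'r" where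
  "fa_add f g = (\<lambda>w. f w + g w)"

definition fa_const :: "'r::idom \<Rightarrow> nat list \<Rightarrow> 'r" where
  "fa_const c = (\<lambda>w. if w = [] then c else 0)"

definition fa_gen :: "nat \<Rightarrow> nat list \<Rightarrow> 'r::idom" where
  "fa_gen i = (\<lambda>w. if w = [i] then 1 else 0)"

definition fa_minus :: "(nat list \<Rightarrow> 'r::idom) \<Rightarrow> (nat list \<Rightarrow> 'r) \<Rightarrow> nat list \<Rightarrow> 'r" where
  "fa_minus f g = (\<lambda>w. f w - g w)"

definition FA :: "nat \<Rightarrow> (nat list \<Rightarrow> 'r::idom) ring" where
  "FA n = \<lparr>carrier = fa_carrier n, mult = fa_mult, one = fa_const 1,
           zero = (\<lambda>_. 0), add = fa_add\<rparr>"

text \<open>Relations (parameters q, Q_1..Q_r):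
  (T_0 - Q_1)...(T_0 - Q_r) = 0;  (T_i - q)(T_i + 1) = 0 for 1 <= i < n;
  T_0 T_1 T_0 T_1 = T_1 T_0 T_1 T_0;  T_i T_(i+1) T_i = T_(i+1) T_i T_(i+1) for 1 <= i <= n-2;
  T_i T_j = T_j T_i for |i - j| > 1.\<close>

definition fa_prod_list :: "(nat list \<Rightarrow> 'r::idom) list \<Rightarrow> nat list \<Rightarrow> 'r" where
  "fa_prod_list xs = foldr fa_mult xs (fa_const 1)"

definition AK_rels :: "nat \<Rightarrow> nat \<Rightarrow> 'r::idom \<Rightarrow> (nat \<Rightarrow> 'r) \<Rightarrow> (nat list \<Rightarrow> 'r) set" where
  "AK_rels n r q Q =
     {fa_prod_list [fa_minus (fa_gen 0) (fa_const (Q s)). s \<leftarrow> [1..<r+1]] | _::unit. 1 \<le> n}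
   \<union> {fa_mult (fa_minus (fa_gen i) (fa_const q)) (fa_add (fa_gen i) (fa_const 1)) | i. 1 \<le> i \<and> i < n}
   \<union> {fa_minus (fa_prod_list [fa_gen 0, fa_gen 1, fa_gen 0, fa_gen 1])
                (fa_prod_list [fa_gen 1, fa_gen 0, fa_gen 1, fa_gen 0]) | _::unit. 2 \<le> n}
   \<union> {fa_minus (fa_prod_list [fa_gen i, fa_gen (i+1), fa_gen i])
                (fa_prod_list [fa_gen (i+1), fa_gen i, fa_gen (i+1)]) | i. 1 \<le> i \<and> i + 1 < n}
   \<union> {fa_minus (fa_mult (fa_gen i) (fa_gen j)) (fa_mult (fa_gen j) (fa_gen i)) | i j.
          i < n \<and> j < n \<and> i + 1 < j}"

definition AK :: "nat \<Rightarrow> nat \<Rightarrow> 'r::idom \<Rightarrow> (nat \<Rightarrow> 'r) \<Rightarrow> (nat list \<Rightarrow> 'r) set ring" where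
  "AK n r q Q = FA n Quot (Idl\<^bsub>FA n\<^esub> (AK_rels n r q Q))"

definition AK_T :: "nat \<Rightarrow> nat \<Rightarrow> 'r::idom \<Rightarrow> (nat \<Rightarrow> 'r) \<Rightarrow> nat \<Rightarrow> (nat list \<Rightarrow> 'r) set" where
  "AK_T n r q Q i = (Idl\<^bsub>FA n\<^esub> (AK_rels n r q Q)) +>\<^bsub>FA n\<^esub> (fa_gen i)"

definition AK_sc :: "nat \<Rightarrow> nat \<Rightarrow> 'r::idom \<Rightarrow> (nat \<Rightarrow> 'r) \<Rightarrow> 'r \<Rightarrow> (nat list \<Rightarrow> 'r) set" where
  "AK_sc n r q Q c = (Idl\<^bsub>FA n\<^esub> (AK_rels n r q Q)) +>\<^bsub>FA n\<^esub> (fa_const c)"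

definition AK_prod :: "nat \<Rightarrow> nat \<Rightarrow> 'r::idom \<Rightarrow> (nat \<Rightarrow> 'r) \<Rightarrow> (nat list \<Rightarrow> 'r) set list
                        \<Rightarrow> (nat list \<Rightarrow> 'r) set" where
  "AK_prod n r q Q xs = foldr (\<lambda>a b. a \<otimes>\<^bsub>AK n r q Q\<^esub> b) xs \<one>\<^bsub>AK n r q Q\<^esub>"

definition qinv :: "'r::idom \<Rightarrow> 'r" where
  "qinv q = (SOME x. q * x = 1)"

definition AK_L :: "nat \<Rightarrow> nat \<Rightarrow> 'r::idom \<Rightarrow> (nat \<Rightarrow> 'r) \<Rightarrow> nat \<Rightarrow> (nat list \<Rightarrow> 'r) set" where
  "AK_L n r q Q k = AK_prod n r q Q
     ([AK_sc n r q Q (qinv q ^ (k - 1))]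
      @ map (AK_T n r q Q) (rev [1..<k]) @ [AK_T n r q Q 0] @ map (AK_T n r q Q) [1..<k])"

definition stp :: "nat \<Rightarrow> nat \<Rightarrow> nat" where
  "stp i = (\<lambda>x. if x = i then i + 1 else if x = i + 1 then i else x)"

definition perm_of_word :: "nat list \<Rightarrow> nat \<Rightarrow> nat" where
  "perm_of_word ws = foldr (\<lambda>i p. stp i \<circ> p) ws id"

definition reduced_word :: "nat \<Rightarrow> (nat \<Rightarrow> nat) \<Rightarrow> nat list \<Rightarrow> bool" where
  "reduced_word n w ws \<longleftrightarrow> set ws \<subseteq> {1..<n} \<and> perm_of_word ws = w \<and>
     (\<forall>ws'. set ws' \<subseteq> {1..<n} \<and> perm_of_word ws' = w \<longrightarrow> length ws \<le> length ws')"

definition AK_Tw :: "nat \<Rightarrow> nat \<Rightarrow> 'r::idom \<Rightarrow> (nat \<Rightarrow> 'r) \<Rightarrow> (nat \<Rightarrow> nat) \<Rightarrow> (nat list \<Rightarrow> 'r) set" where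
  "AK_Tw n r q Q w = AK_prod n r q Q (map (AK_T n r q Q) (SOME ws. reduced_word n w ws))"

text \<open>A multicomposition mu = (mu^(1),...,mu^(r)) is encoded as mu :: nat => nat => nat,
  where mu s i is the (i+1)-th part of the component mu^(s+1) (s < r, i >= 0);
  components are sequences of nonnegative integers with finitely many nonzero terms
  (trailing zeros are immaterial).\<close>

definition csize :: "(nat \<Rightarrow> nat \<Rightarrow> nat) \<Rightarrow> nat \<Rightarrow> nat" where
  "csize mu s = (\<Sum>i\<in>{i. mu s i \<noteq> 0}. mu s i)"

definition multicomp :: "nat \<Rightarrow> nat \<Rightarrow> (nat \<Rightarrow> nat \<Rightarrow> nat) \<Rightarrow> bool" where
  "multicomp r n mu \<longleftrightarrow> (\<forall>s i. r \<le> s \<longrightarrow> mu s i = 0) \<and>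
     (\<forall>s. finite {i. mu s i \<noteq> 0}) \<and> (\<Sum>s<r. csize mu s) = n"

definition multipart :: "nat \<Rightarrow> nat \<Rightarrow> (nat \<Rightarrow> nat \<Rightarrow> nat) \<Rightarrow> bool" where
  "multipart r n mu \<longleftrightarrow> multicomp r n mu \<and> (\<forall>s i. mu s (Suc i) \<le> mu s i)"

definition dominates :: "nat \<Rightarrow> (nat \<Rightarrow> nat \<Rightarrow> nat) \<Rightarrow> (nat \<Rightarrow> nat \<Rightarrow> nat) \<Rightarrow> bool" where
  "dominates r lam mu \<longleftrightarrow> (\<forall>s<r. \<forall>j.
     (\<Sum>t<s. csize mu t) + (\<Sum>i\<le>j. mu s i) \<le> (\<Sum>t<s. csize lam t) + (\<Sum>i\<le>j. lam s i))"

definition Lambda_plus :: "nat \<Rightarrow> nat \<Rightarrow> (nat \<Rightarrow> nat \<Rightarrow> nat) set \<Rightarrow> (nat \<Rightarrow> nat \<Rightarrow> nat) set" where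
  "Lambda_plus r n Lam = {lam. multipart r n lam \<and> (\<exists>mu\<in>Lam. dominates r lam mu)}"

text \<open>omega = ((0),...,(0),(1^n)).\<close>
definition omega :: "nat \<Rightarrow> nat \<Rightarrow> nat \<Rightarrow> nat \<Rightarrow> nat" where
  "omega r n = (\<lambda>s i. if s + 1 = r \<and> i < n then 1 else 0)"

text \<open>Young subgroup S_mu: the rows of mu, read in the order mu^(1)_1, mu^(1)_2, ...,
  mu^(2)_1, ..., occupy consecutive blocks of {1..n}; S_mu is the stabiliser of all blocks.\<close>
definition row_block :: "(nat \<Rightarrow> nat \<Rightarrow> nat) \<Rightarrow> nat \<Rightarrow> nat \<Rightarrow> nat set" where
  "row_block mu s i = (let b = (\<Sum>t<s. csize mu t) + (\<Sum>j<i. mu s j) in {b + 1 .. b + mu s i})"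

definition young_subgroup :: "nat \<Rightarrow> nat \<Rightarrow> (nat \<Rightarrow> nat \<Rightarrow> nat) \<Rightarrow> (nat \<Rightarrow> nat) set" where
  "young_subgroup r n mu = {w. bij_betw w {1..n} {1..n} \<and> (\<forall>x. x \<notin> {1..n} \<longrightarrow> w x = x) \<and>
      (\<forall>s<r. \<forall>i. w ` row_block mu s i = row_block mu s i)}"

definition AK_x :: "nat \<Rightarrow> nat \<Rightarrow> 'r::idom \<Rightarrow> (nat \<Rightarrow> 'r) \<Rightarrow> (nat \<Rightarrow> nat \<Rightarrow> nat) \<Rightarrow> (nat list \<Rightarrow> 'r) set" where
  "AK_x n r q Q mu = finsum (AK n r q Q) (AK_Tw n r q Q) (young_subgroup r n mu)"

definition AK_u :: "nat \<Rightarrow> nat \<Rightarrow> 'r::idom \<Rightarrow> (nat \<Rightarrow> 'r) \<Rightarrow> (nat \<Rightarrow> nat \<Rightarrow> nat) \<Rightarrow> (nat list \<Rightarrow> 'r) set" where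
  "AK_u n r q Q mu = AK_prod n r q Q
     [AK_L n r q Q k \<ominus>\<^bsub>AK n r q Q\<^esub> AK_sc n r q Q (Q s).
        s \<leftarrow> [2..<r+1], k \<leftarrow> [1..<(\<Sum>t<s-1. csize mu t) + 1]]"

definition AK_m :: "nat \<Rightarrow> nat \<Rightarrow> 'r::idom \<Rightarrow> (nat \<Rightarrow> 'r) \<Rightarrow> (nat \<Rightarrow> nat \<Rightarrow> nat) \<Rightarrow> (nat list \<Rightarrow> 'r) set" where
  "AK_m n r q Q mu = AK_x n r q Q mu \<otimes>\<^bsub>AK n r q Q\<^esub> AK_u n r q Q mu"

definition Mperm :: "nat \<Rightarrow> nat \<Rightarrow> 'r::idom \<Rightarrow> (nat \<Rightarrow> 'r) \<Rightarrow> (nat \<Rightarrow> nat \<Rightarrow> nat) \<Rightarrow> (nat list \<Rightarrow> 'r) set set" where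
  "Mperm n r q Q mu = (\<lambda>h. AK_m n r q Q mu \<otimes>\<^bsub>AK n r q Q\<^esub> h) ` carrier (AK n r q Q)"

definition Msum :: "nat \<Rightarrow> nat \<Rightarrow> 'r::idom \<Rightarrow> (nat \<Rightarrow> 'r) \<Rightarrow> (nat \<Rightarrow> nat \<Rightarrow> nat) set
                    \<Rightarrow> ((nat \<Rightarrow> nat \<Rightarrow> nat) \<Rightarrow> (nat list \<Rightarrow> 'r) set) set" where
  "Msum n r q Q Lam = (\<Pi>\<^sub>E mu\<in>Lam. Mperm n r q Q mu)"

definition Msum_add where
  "Msum_add n r q Q Lam x y = (\<lambda>mu\<in>Lam. x mu \<oplus>\<^bsub>AK n r q Q\<^esub> y mu)"

definition Msum_act where
  "Msum_act n r q Q Lam x h = (\<lambda>mu\<in>Lam. x mu \<otimes>\<^bsub>AK n r q Q\<^esub> h)"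

text \<open>Cyclotomic q-Schur algebra S(Lam) = End_H(direct sum of M^mu), acting on the left.\<close>
definition Schur where
  "Schur n r q Q Lam = {phi. phi \<in> extensional (Msum n r q Q Lam) \<and>
      phi \<in> Msum n r q Q Lam \<rightarrow> Msum n r q Q Lam \<and>
      (\<forall>x\<in>Msum n r q Q Lam. \<forall>y\<in>Msum n r q Q Lam.
          phi (Msum_add n r q Q Lam x y) = Msum_add n r q Q Lam (phi x) (phi y)) \<and>
      (\<forall>x\<in>Msum n r q Q Lam. \<forall>h\<in>carrier (AK n r q Q).
          phi (Msum_act n r q Q Lam x h) = Msum_act n r q Q Lam (phi x) h)}"

definition End_Schur where
  "End_Schur n r q Q Lam = {psi. psi \<in> extensional (Msum n r q Q Lam) \<and>
      psi \<in> Msum n r q Q Lam \<rightarrow> Msum n r q Q Lam \<and>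
      (\<forall>x\<in>Msum n r q Q Lam. \<forall>y\<in>Msum n r q Q Lam.
          psi (Msum_add n r q Q Lam x y) = Msum_add n r q Q Lam (psi x) (psi y)) \<and>
      (\<forall>phi\<in>Schur n r q Q Lam. \<forall>x\<in>Msum n r q Q Lam. psi (phi x) = phi (psi x))}"

definition nat_map where
  "nat_map n r q Q Lam h = (\<lambda>x\<in>Msum n r q Q Lam. Msum_act n r q Q Lam x h)"

end

theory Submission
  imports Defs "HOL-Combinatorics.Permutations"
begin

text \<open>
  The isomorphism S(Lam) = End_H(M) is the definition of S(Lam); the content is the double
  centralizer property.  Since the Young subgroup of omega is trivial and u^+_omega is an empty
  product, m_omega = 1, so M^omega = H and M contains the regular right H-module, generated by
  e = (1 in the omega-th place, 0 elsewhere).  For x in M and a summand nu, the map sending z to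
  x_nu z_omega (in the nu-th place) is an H-endomorphism taking e to the nu-th component of x.
  Hence every psi commuting with S(Lam) satisfies psi(x)_nu = x_nu psi(e)_omega: psi is right
  multiplication by psi(e)_omega, and right multiplication by h takes e to h in the omega-th place.
  Nothing beyond a ring and a family of cyclic right ideals, one of them generated by 1, is used.
\<close>

section \<open>The bicommutant of a sum of cyclic right ideals\<close>

definition right_principal :: "('a, 'b) ring_scheme \<Rightarrow> 'a \<Rightarrow> 'a set" where
  "right_principal R a = (\<lambda>h. a \<otimes>\<^bsub>R\<^esub> h) ` carrier R"

definition cyclic_sum :: "('a, 'b) ring_scheme \<Rightarrow> 'i set \<Rightarrow> ('i \<Rightarrow> 'a) \<Rightarrow> ('i \<Rightarrow> 'a) set" where
  "cyclic_sum R I g = (\<Pi>\<^sub>E i\<in>I. right_principal R (g i))"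

definition cyclic_sum_add :: "('a, 'b) ring_scheme \<Rightarrow> 'i set \<Rightarrow> ('i \<Rightarrow> 'a) \<Rightarrow> ('i \<Rightarrow> 'a) \<Rightarrow> 'i \<Rightarrow> 'a" where
  "cyclic_sum_add R I x y = (\<lambda>i\<in>I. x i \<oplus>\<^bsub>R\<^esub> y i)"

definition cyclic_sum_act :: "('a, 'b) ring_scheme \<Rightarrow> 'i set \<Rightarrow> ('i \<Rightarrow> 'a) \<Rightarrow> 'a \<Rightarrow> 'i \<Rightarrow> 'a" where
  "cyclic_sum_act R I x h = (\<lambda>i\<in>I. x i \<otimes>\<^bsub>R\<^esub> h)"

definition cyclic_sum_End :: "('a, 'b) ring_scheme \<Rightarrow> 'i set \<Rightarrow> ('i \<Rightarrow> 'a) \<Rightarrow> (('i \<Rightarrow> 'a) \<Rightarrow> 'i \<Rightarrow> 'a) set" where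
  "cyclic_sum_End R I g = {phi. phi \<in> extensional (cyclic_sum R I g) \<and>
      phi \<in> cyclic_sum R I g \<rightarrow> cyclic_sum R I g \<and>
      (\<forall>x\<in>cyclic_sum R I g. \<forall>y\<in>cyclic_sum R I g.
          phi (cyclic_sum_add R I x y) = cyclic_sum_add R I (phi x) (phi y)) \<and>
      (\<forall>x\<in>cyclic_sum R I g. \<forall>h\<in>carrier R.
          phi (cyclic_sum_act R I x h) = cyclic_sum_act R I (phi x) h)}"

definition cyclic_sum_bicommutant ::
    "('a, 'b) ring_scheme \<Rightarrow> 'i set \<Rightarrow> ('i \<Rightarrow> 'a) \<Rightarrow> (('i \<Rightarrow> 'a) \<Rightarrow> 'i \<Rightarrow> 'a) set" where
  "cyclic_sum_bicommutant R I g = {psi. psi \<in> extensional (cyclic_sum R I g) \<and>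
      psi \<in> cyclic_sum R I g \<rightarrow> cyclic_sum R I g \<and>
      (\<forall>x\<in>cyclic_sum R I g. \<forall>y\<in>cyclic_sum R I g.
          psi (cyclic_sum_add R I x y) = cyclic_sum_add R I (psi x) (psi y)) \<and>
      (\<forall>phi\<in>cyclic_sum_End R I g. \<forall>x\<in>cyclic_sum R I g. psi (phi x) = phi (psi x))}"

definition right_mult_action :: "('a, 'b) ring_scheme \<Rightarrow> 'i set \<Rightarrow> ('i \<Rightarrow> 'a) \<Rightarrow> 'a \<Rightarrow> ('i \<Rightarrow> 'a) \<Rightarrow> 'i \<Rightarrow> 'a" where
  "right_mult_action R I g h = (\<lambda>x\<in>cyclic_sum R I g. cyclic_sum_act R I x h)"

context ring
begin

lemma right_principal_one: "right_principal R \<one> = carrier R"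
  by (auto simp: right_principal_def image_iff)

lemma right_principal_subset: "a \<in> carrier R \<Longrightarrow> right_principal R a \<subseteq> carrier R"
  by (auto simp: right_principal_def)

lemma right_principal_zero: "a \<in> carrier R \<Longrightarrow> \<zero> \<in> right_principal R a"
  unfolding right_principal_def by (rule image_eqI[of _ _ \<zero>]) auto

lemma right_principal_add:
  "\<lbrakk>a \<in> carrier R; x \<in> right_principal R a; y \<in> right_principal R a\<rbrakk>
     \<Longrightarrow> x \<oplus> y \<in> right_principal R a"
  by (auto simp: right_principal_def r_distr[symmetric])

lemma right_principal_mult:
  "\<lbrakk>a \<in> carrier R; x \<in> right_principal R a; h \<in> carrier R\<rbrakk>
     \<Longrightarrow> x \<otimes> h \<in> right_principal R a"
  by (auto simp: right_principal_def m_assoc)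

end

locale regular_summand = ring R for R (structure) +
  fixes I :: "'i set" and g :: "'i \<Rightarrow> 'a" and i0 :: 'i
  assumes gen_closed: "i \<in> I \<Longrightarrow> g i \<in> carrier R"
    and i0_in_I: "i0 \<in> I" and gen_i0: "g i0 = \<one>"
begin

abbreviation M where "M \<equiv> cyclic_sum R I g"

lemma cyclic_sum_component: "\<lbrakk>x \<in> M; i \<in> I\<rbrakk> \<Longrightarrow> x i \<in> right_principal R (g i)"
  by (auto simp: cyclic_sum_def)

lemma zero_in_summand: "i \<in> I \<Longrightarrow> \<zero> \<in> right_principal R (g i)"
  by (simp add: right_principal_zero gen_closed)

lemma cyclic_sum_carrier: "\<lbrakk>x \<in> M; i \<in> I\<rbrakk> \<Longrightarrow> x i \<in> carrier R"
  using cyclic_sum_component right_principal_subset gen_closed by blast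

lemma cyclic_sum_add_closed: "\<lbrakk>x \<in> M; y \<in> M\<rbrakk> \<Longrightarrow> cyclic_sum_add R I x y \<in> M"
  by (auto simp: cyclic_sum_add_def cyclic_sum_def intro!: right_principal_add gen_closed)

lemma cyclic_sum_act_closed: "\<lbrakk>x \<in> M; h \<in> carrier R\<rbrakk> \<Longrightarrow> cyclic_sum_act R I x h \<in> M"
  by (auto simp: cyclic_sum_act_def cyclic_sum_def intro!: right_principal_mult gen_closed)

lemma right_mult_action_apply [simp]: "x \<in> M \<Longrightarrow> right_mult_action R I g h x = cyclic_sum_act R I x h"
  by (simp add: right_mult_action_def)

lemma right_mult_action_in_bicommutant:
  assumes h: "h \<in> carrier R"
  shows "right_mult_action R I g h \<in> cyclic_sum_bicommutant R I g"
  unfolding cyclic_sum_bicommutant_def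
proof (intro CollectI conjI ballI)
  show "right_mult_action R I g h \<in> extensional M"
    by (simp add: right_mult_action_def)
  show "right_mult_action R I g h \<in> M \<rightarrow> M"
    using h by (simp add: cyclic_sum_act_closed)
next
  fix x y assume x: "x \<in> M" and y: "y \<in> M"
  then show "right_mult_action R I g h (cyclic_sum_add R I x y)
      = cyclic_sum_add R I (right_mult_action R I g h x) (right_mult_action R I g h y)"
    using h unfolding right_mult_action_apply[OF cyclic_sum_add_closed[OF x y]]
    by (auto simp: cyclic_sum_add_def cyclic_sum_act_def l_distr cyclic_sum_carrier
        intro!: restrict_ext)
next
  fix phi x assume phi: "phi \<in> cyclic_sum_End R I g" and x: "x \<in> M"
  then have "phi x \<in> M" by (auto simp: cyclic_sum_End_def)
  with phi x h show "right_mult_action R I g h (phi x) = phi (right_mult_action R I g h x)"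
    by (simp add: cyclic_sum_End_def)
qed

definition component_map :: "'i \<Rightarrow> 'i \<Rightarrow> 'a \<Rightarrow> ('i \<Rightarrow> 'a) \<Rightarrow> 'i \<Rightarrow> 'a" where
  "component_map j nu a = (\<lambda>z\<in>M. \<lambda>i\<in>I. if i = nu then a \<otimes> z j else \<zero>)"

lemma component_map_in_End:
  assumes j: "j \<in> I" and nu: "nu \<in> I" and a: "a \<in> carrier R"
    and maps_into: "\<And>z. z \<in> right_principal R (g j) \<Longrightarrow> a \<otimes> z \<in> right_principal R (g nu)"
  shows "component_map j nu a \<in> cyclic_sum_End R I g"
  unfolding cyclic_sum_End_def
proof (intro CollectI conjI ballI)
  show "component_map j nu a \<in> extensional M"
    by (simp add: component_map_def)
  show "component_map j nu a \<in> M \<rightarrow> M"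
  proof
    fix z assume "z \<in> M"
    then have "a \<otimes> z j \<in> right_principal R (g nu)"
      using j by (intro maps_into cyclic_sum_component)
    then show "component_map j nu a z \<in> M"
      using \<open>z \<in> M\<close> by (auto simp: component_map_def cyclic_sum_def zero_in_summand)
  qed
next
  fix x y assume x: "x \<in> M" and y: "y \<in> M"
  show "component_map j nu a (cyclic_sum_add R I x y)
      = cyclic_sum_add R I (component_map j nu a x) (component_map j nu a y)"
    unfolding component_map_def restrict_apply'[OF cyclic_sum_add_closed[OF x y]]
      restrict_apply'[OF x] restrict_apply'[OF y]
    using x y j a by (auto simp: cyclic_sum_add_def r_distr cyclic_sum_carrier intro!: restrict_ext)
next
  fix x h assume x: "x \<in> M" and h: "h \<in> carrier R"
  show "component_map j nu a (cyclic_sum_act R I x h)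
      = cyclic_sum_act R I (component_map j nu a x) h"
    unfolding component_map_def restrict_apply'[OF cyclic_sum_act_closed[OF x h]]
      restrict_apply'[OF x]
    using x h j a by (auto simp: cyclic_sum_act_def m_assoc cyclic_sum_carrier intro!: restrict_ext)
qed

definition regular_generator :: "'i \<Rightarrow> 'a" where
  "regular_generator = (\<lambda>i\<in>I. if i = i0 then \<one> else \<zero>)"

lemma regular_generator_in: "regular_generator \<in> M"
  by (auto simp: regular_generator_def cyclic_sum_def gen_i0 right_principal_one zero_in_summand)

lemma right_mult_action_regular_generator:
  "h \<in> carrier R \<Longrightarrow> right_mult_action R I g h regular_generator i0 = h"
  using regular_generator_in i0_in_I by (simp add: cyclic_sum_act_def regular_generator_def)

lemma bicommutant_is_right_mult:
  assumes psi: "psi \<in> cyclic_sum_bicommutant R I g"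
  shows "psi = right_mult_action R I g (psi regular_generator i0)"
proof -
  let ?e = regular_generator and ?h = "psi regular_generator i0"
  have psi_closed: "psi z \<in> M" if "z \<in> M" for z
    using psi that by (auto simp: cyclic_sum_bicommutant_def)
  have psi_comm: "psi (phi z) = phi (psi z)" if "phi \<in> cyclic_sum_End R I g" "z \<in> M" for phi z
    using psi that by (auto simp: cyclic_sum_bicommutant_def)
  have psi_component: "psi x nu = x nu \<otimes> ?h" if x: "x \<in> M" and nu: "nu \<in> I" for x nu
  proof -
    have xnu: "x nu \<in> carrier R" using cyclic_sum_carrier[OF x nu] .
    have proj: "component_map nu nu \<one> \<in> cyclic_sum_End R I g"
      using nu right_principal_subset[OF gen_closed[OF nu]] by (intro component_map_in_End) auto
    have embed: "component_map i0 nu (x nu) \<in> cyclic_sum_End R I g"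
      using i0_in_I nu xnu cyclic_sum_component[OF x nu] gen_closed
      by (intro component_map_in_End) (auto simp: gen_i0 right_principal_one
          intro!: right_principal_mult)
    \<comment> \<open>The projection of x onto its nu-th summand is the image of e under embed.\<close>
    have "component_map nu nu \<one> x = component_map i0 nu (x nu) ?e"
      using x xnu regular_generator_in i0_in_I
      by (auto simp: component_map_def regular_generator_def intro!: restrict_ext)
    then have "psi x nu = component_map nu nu \<one> (psi x) nu"
      using psi_closed[OF x] nu cyclic_sum_carrier by (simp add: component_map_def)
    also have "\<dots> = psi (component_map nu nu \<one> x) nu"
      using psi_comm[OF proj x] by simp
    also have "\<dots> = component_map i0 nu (x nu) (psi ?e) nu"
      using \<open>component_map nu nu \<one> x = _\<close> psi_comm[OF embed regular_generator_in] by simp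
    also have "\<dots> = x nu \<otimes> ?h"
      using psi_closed[OF regular_generator_in] nu by (simp add: component_map_def)
    finally show ?thesis .
  qed
  show ?thesis
  proof (rule extensionalityI[where A = M])
    show "psi \<in> extensional M"
      using psi by (simp add: cyclic_sum_bicommutant_def)
    show "right_mult_action R I g ?h \<in> extensional M"
      by (simp add: right_mult_action_def)
    fix x assume x: "x \<in> M"
    show "psi x = right_mult_action R I g ?h x"
    proof (rule extensionalityI[where A = I])
      show "psi x \<in> extensional I"
        using psi_closed[OF x] by (simp add: cyclic_sum_def PiE_def)
      show "right_mult_action R I g ?h x \<in> extensional I"
        using x by (simp add: cyclic_sum_act_def)
    qed (use x psi_component in \<open>simp add: cyclic_sum_act_def\<close>)
  qed
qed

lemma right_mult_action_bij:
  "bij_betw (right_mult_action R I g) (carrier R) (cyclic_sum_bicommutant R I g)"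
proof (rule bij_betw_imageI)
  show "inj_on (right_mult_action R I g) (carrier R)"
    by (rule inj_on_inverseI[where g = "\<lambda>psi. psi regular_generator i0"])
      (rule right_mult_action_regular_generator)
  show "right_mult_action R I g ` carrier R = cyclic_sum_bicommutant R I g"
  proof
    show "right_mult_action R I g ` carrier R \<subseteq> cyclic_sum_bicommutant R I g"
      using right_mult_action_in_bicommutant by blast
    show "cyclic_sum_bicommutant R I g \<subseteq> right_mult_action R I g ` carrier R"
    proof
      fix psi assume psi: "psi \<in> cyclic_sum_bicommutant R I g"
      then have "psi regular_generator \<in> M"
        using regular_generator_in by (auto simp: cyclic_sum_bicommutant_def)
      then have "psi regular_generator i0 \<in> carrier R"
        using i0_in_I by (rule cyclic_sum_carrier)
      with bicommutant_is_right_mult[OF psi] show "psi \<in> right_mult_action R I g ` carrier R"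
        by blast
    qed
  qed
qed

lemma right_mult_action_one: "right_mult_action R I g \<one> = (\<lambda>x\<in>M. x)"
  unfolding right_mult_action_def
proof (rule restrict_ext)
  fix x assume x: "x \<in> M"
  show "cyclic_sum_act R I x \<one> = x"
  proof (rule extensionalityI[where A = I])
    show "x \<in> extensional I"
      using x by (simp add: cyclic_sum_def PiE_def)
  qed (use x in \<open>simp_all add: cyclic_sum_act_def cyclic_sum_carrier\<close>)
qed

lemma right_mult_action_add:
  "\<lbrakk>h \<in> carrier R; k \<in> carrier R\<rbrakk> \<Longrightarrow> right_mult_action R I g (h \<oplus> k)
     = (\<lambda>x\<in>M. cyclic_sum_add R I (right_mult_action R I g h x) (right_mult_action R I g k x))"
  unfolding right_mult_action_def
  by (auto simp: cyclic_sum_add_def cyclic_sum_act_def r_distr cyclic_sum_carrier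
      intro!: restrict_ext)

lemma right_mult_action_mult:
  assumes h: "h \<in> carrier R" and k: "k \<in> carrier R"
  shows "right_mult_action R I g (h \<otimes> k)
     = compose M (right_mult_action R I g k) (right_mult_action R I g h)"
  unfolding compose_def right_mult_action_def
proof (rule restrict_ext)
  fix x assume x: "x \<in> M"
  then have "cyclic_sum_act R I x h \<in> M"
    using h by (rule cyclic_sum_act_closed)
  then show "cyclic_sum_act R I x (h \<otimes> k)
      = (\<lambda>x\<in>M. cyclic_sum_act R I x k) ((\<lambda>x\<in>M. cyclic_sum_act R I x h) x)"
    using x h k by (simp add: cyclic_sum_act_def m_assoc cyclic_sum_carrier cong: restrict_cong)
qed

end

section \<open>The free algebra\<close>

lemma fa_mult_assoc: "fa_mult (fa_mult f g) h = fa_mult f (fa_mult g h)"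
proof
  fix w :: "nat list"
  define L where "L = length w"
  define F where "F = (\<lambda>i j. f (take i w) * g (take j (drop i w)) * h (drop (i+j) w))"
  have "fa_mult (fa_mult f g) h w
      = (\<Sum>k\<in>{0..L}. (\<Sum>i\<in>{0..k}. f (take i (take k w)) * g (drop i (take k w))) * h (drop k w))"
    unfolding fa_mult_def L_def by (rule sum.cong) (auto intro!: sum.cong)
  also have "\<dots> = (\<Sum>k\<le>L. \<Sum>i\<le>k. F i (k - i))"
    by (auto simp: F_def sum_distrib_right drop_take atLeast0AtMost intro!: sum.cong)
  also have "\<dots> = (\<Sum>(i,j)\<in>{(i,j). i+j \<le> L}. F i j)"
    by (rule sum.triangle_reindex_eq[symmetric])
  also have "\<dots> = (\<Sum>i\<le>L. \<Sum>j\<le>L-i. F i j)"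
  proof -
    have "{(i,j). i+j \<le> L} = Sigma {..L} (\<lambda>i. {..L-i})" by auto
    then show ?thesis by (simp add: sum.Sigma)
  qed
  also have "\<dots> = fa_mult f (fa_mult g h) w"
    by (auto simp: fa_mult_def F_def L_def sum_distrib_left atLeast0AtMost mult.assoc add.commute
        intro!: sum.cong)
  finally show "fa_mult (fa_mult f g) h w = fa_mult f (fa_mult g h) w" .
qed

lemma fa_mult_one_left: "fa_mult (fa_const 1) f = f"
proof
  fix w :: "nat list"
  have "fa_mult (fa_const 1) f w = (\<Sum>k\<in>{0..length w}. if k = 0 then f w else 0)"
    unfolding fa_mult_def fa_const_def by (rule sum.cong) auto
  then show "fa_mult (fa_const 1) f w = f w" by simp
qed

lemma fa_mult_one_right: "fa_mult f (fa_const 1) = f"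
proof
  fix w :: "nat list"
  have "fa_mult f (fa_const 1) w = (\<Sum>k\<in>{0..length w}. if k = length w then f w else 0)"
    unfolding fa_mult_def fa_const_def by (rule sum.cong) auto
  then show "fa_mult f (fa_const 1) w = f w" by simp
qed

lemma fa_distrib_right: "fa_mult (fa_add f g) h = fa_add (fa_mult f h) (fa_mult g h)"
  by (auto simp: fa_mult_def fa_add_def distrib_right sum.distrib)

lemma fa_distrib_left: "fa_mult h (fa_add f g) = fa_add (fa_mult h f) (fa_mult h g)"
  by (auto simp: fa_mult_def fa_add_def distrib_left sum.distrib)

lemma fa_carrier_by_support:
  assumes "f \<in> fa_carrier n" "g \<in> fa_carrier n" and supp: "\<And>w. h w \<noteq> 0 \<Longrightarrow> f w \<noteq> 0 \<or> g w \<noteq> 0"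
  shows "h \<in> fa_carrier n"
proof -
  have "{w. h w \<noteq> 0} \<subseteq> {w. f w \<noteq> 0} \<union> {w. g w \<noteq> 0}"
    using supp by blast
  then show ?thesis
    using assms(1,2) unfolding fa_carrier_def by (auto intro: finite_subset dest: supp)
qed

lemma fa_add_closed: "\<lbrakk>f \<in> fa_carrier n; g \<in> fa_carrier n\<rbrakk> \<Longrightarrow> fa_add f g \<in> fa_carrier n"
  by (erule fa_carrier_by_support) (auto simp: fa_add_def)

lemma fa_minus_closed: "\<lbrakk>f \<in> fa_carrier n; g \<in> fa_carrier n\<rbrakk> \<Longrightarrow> fa_minus f g \<in> fa_carrier n"
  by (erule fa_carrier_by_support) (auto simp: fa_minus_def)

lemma fa_mult_closed:
  assumes "f \<in> fa_carrier n" "g \<in> fa_carrier n"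
  shows "fa_mult f g \<in> fa_carrier n"
proof -
  have split: "\<exists>k. f (take k w) \<noteq> 0 \<and> g (drop k w) \<noteq> 0" if "fa_mult f g w \<noteq> 0" for w
  proof (rule ccontr)
    assume "\<not> ?thesis"
    then have "fa_mult f g w = 0" unfolding fa_mult_def by (intro sum.neutral) auto
    with that show False by simp
  qed
  let ?Sf = "{w. f w \<noteq> 0}" and ?Sg = "{w. g w \<noteq> 0}"
  have "{w. fa_mult f g w \<noteq> 0} \<subseteq> (\<lambda>(u,v). u @ v) ` (?Sf \<times> ?Sg)"
  proof
    fix w assume "w \<in> {w. fa_mult f g w \<noteq> 0}"
    then obtain k where "f (take k w) \<noteq> 0" "g (drop k w) \<noteq> 0" using split by blast
    then show "w \<in> (\<lambda>(u,v). u @ v) ` (?Sf \<times> ?Sg)"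
      by (intro image_eqI[of _ _ "(take k w, drop k w)"]) auto
  qed
  moreover have "finite ((\<lambda>(u,v). u @ v) ` (?Sf \<times> ?Sg))"
    using assms by (auto simp: fa_carrier_def)
  moreover have "set w \<subseteq> {..<n}" if w: "fa_mult f g w \<noteq> 0" for w
  proof -
    obtain k where "f (take k w) \<noteq> 0" "g (drop k w) \<noteq> 0" using split[OF w] by blast
    then have "set (take k w) \<subseteq> {..<n}" "set (drop k w) \<subseteq> {..<n}"
      using assms by (auto simp: fa_carrier_def)
    then show ?thesis by (metis append_take_drop_id set_append Un_subset_iff)
  qed
  ultimately show ?thesis by (auto simp: fa_carrier_def intro: finite_subset)
qed

lemma fa_const_closed: "fa_const c \<in> fa_carrier n"
proof -
  have "{w. fa_const c w \<noteq> 0} \<subseteq> {[]}" by (auto simp: fa_const_def)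
  then show ?thesis unfolding fa_carrier_def by (auto simp: fa_const_def intro: finite_subset)
qed

lemma fa_gen_closed: "i < n \<Longrightarrow> (fa_gen i :: nat list \<Rightarrow> 'r::idom) \<in> fa_carrier n"
proof -
  assume "i < n"
  have "{w. (fa_gen i :: nat list \<Rightarrow> 'r) w \<noteq> 0} \<subseteq> {[i]}" by (auto simp: fa_gen_def)
  then show ?thesis
    using \<open>i < n\<close> unfolding fa_carrier_def by (auto simp: fa_gen_def intro: finite_subset)
qed

lemma fa_prod_list_closed: "set xs \<subseteq> fa_carrier n \<Longrightarrow> fa_prod_list xs \<in> fa_carrier n"
  by (induction xs) (auto simp: fa_prod_list_def fa_const_closed fa_mult_closed)

lemma carrier_FA: "carrier (FA n) = fa_carrier n"
  by (simp add: FA_def)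

lemma FA_ring: "ring (FA n :: (nat list \<Rightarrow> 'r::idom) ring)"
proof (rule ringI)
  show "abelian_group (FA n :: (nat list \<Rightarrow> 'r) ring)"
  proof (rule abelian_groupI, simp_all add: FA_def fa_add_closed)
    show "(\<lambda>_. 0) \<in> fa_carrier n" by (simp add: fa_carrier_def)
    show "\<And>x y z. fa_add (fa_add x y) z = fa_add x (fa_add y z)" by (simp add: fa_add_def add.assoc)
    show "\<And>x y. fa_add x y = fa_add y x" by (simp add: fa_add_def add.commute)
    show "\<And>x. fa_add (\<lambda>_. 0) x = x" by (simp add: fa_add_def)
    fix x :: "nat list \<Rightarrow> 'r" assume "x \<in> fa_carrier n"
    then have "(\<lambda>w. - x w) \<in> fa_carrier n"
      by (rule fa_carrier_by_support[OF _ \<open>x \<in> fa_carrier n\<close>]) auto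
    then show "\<exists>y\<in>fa_carrier n. fa_add y x = (\<lambda>_. 0)"
      by (rule bexI[rotated]) (simp add: fa_add_def)
  qed
  show "monoid (FA n :: (nat list \<Rightarrow> 'r) ring)"
    by (rule monoidI) (simp_all add: FA_def fa_mult_closed fa_const_closed fa_mult_assoc
        fa_mult_one_left fa_mult_one_right)
qed (simp_all add: FA_def fa_distrib_right fa_distrib_left)

section \<open>The Ariki--Koike algebra and the elements m_mu\<close>

lemma AK_rels_subset: "AK_rels n r q Q \<subseteq> fa_carrier n"
  unfolding AK_rels_def
  by (auto intro!: fa_prod_list_closed fa_minus_closed fa_mult_closed fa_add_closed
      fa_gen_closed fa_const_closed)

lemma AK_ring: "ring (AK n r q Q)"
  unfolding AK_def
  by (rule ideal.quotient_is_ring, rule ring.genideal_ideal[OF FA_ring])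
    (simp add: carrier_FA AK_rels_subset)

lemma AK_coset_closed:
  "a \<in> fa_carrier n \<Longrightarrow> (Idl\<^bsub>FA n\<^esub> (AK_rels n r q Q)) +>\<^bsub>FA n\<^esub> a \<in> carrier (AK n r q Q)"
  unfolding AK_def FactRing_def by (auto simp: A_RCOSETS_def' carrier_FA)

lemma AK_T_closed: "i < n \<Longrightarrow> AK_T n r q Q i \<in> carrier (AK n r q Q)"
  unfolding AK_T_def by (rule AK_coset_closed[OF fa_gen_closed])

lemma AK_sc_closed: "AK_sc n r q Q c \<in> carrier (AK n r q Q)"
  unfolding AK_sc_def by (rule AK_coset_closed[OF fa_const_closed])

lemma AK_prod_closed: "set xs \<subseteq> carrier (AK n r q Q) \<Longrightarrow> AK_prod n r q Q xs \<in> carrier (AK n r q Q)"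
  by (induction xs) (auto simp: AK_prod_def ring.ring_simprules[OF AK_ring])

lemma AK_L_closed: "\<lbrakk>1 \<le> k; k \<le> n\<rbrakk> \<Longrightarrow> AK_L n r q Q k \<in> carrier (AK n r q Q)"
  unfolding AK_L_def by (rule AK_prod_closed) (auto simp: AK_sc_closed intro!: AK_T_closed)

lemma multicomp_initial_size_le:
  assumes "multicomp r n mu" "m \<le> r"
  shows "(\<Sum>t<m. csize mu t) \<le> n"
proof -
  have "(\<Sum>t<m. csize mu t) \<le> (\<Sum>t<r. csize mu t)"
    using assms(2) by (intro sum_mono2) auto
  then show ?thesis using assms(1) by (simp add: multicomp_def)
qed

lemma AK_u_closed:
  assumes "multicomp r n mu"
  shows "AK_u n r q Q mu \<in> carrier (AK n r q Q)"
proof -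
  have "AK_L n r q Q k \<ominus>\<^bsub>AK n r q Q\<^esub> AK_sc n r q Q (Q s) \<in> carrier (AK n r q Q)"
    if "s \<le> r" "1 \<le> k" "k \<le> (\<Sum>t<s - 1. csize mu t)" for s k
  proof -
    have "(\<Sum>t<s - 1. csize mu t) \<le> n"
      using that(1) by (intro multicomp_initial_size_le[OF assms]) simp
    then show ?thesis
      using that by (intro ring.ring_simprules(4)[OF AK_ring] AK_L_closed AK_sc_closed) auto
  qed
  then show ?thesis
    unfolding AK_u_def by (intro AK_prod_closed) auto
qed

lemma perm_of_word_append: "perm_of_word (xs @ ys) = perm_of_word xs \<circ> perm_of_word ys"
  by (induction xs) (auto simp: perm_of_word_def)

lemma transpose_as_word:
  assumes "a < b"
  shows "\<exists>ws. set ws \<subseteq> {a..<b} \<and> perm_of_word ws = transpose a b"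
proof -
  obtain d where b: "b = a + 1 + d"
    using assms by (metis add.commute less_imp_Suc_add plus_1_eq_Suc add.left_commute)
  have "\<exists>ws. set ws \<subseteq> {a..<a+1+d} \<and> perm_of_word ws = transpose a (a+1+d)"
  proof (induction d)
    case 0
    show ?case
      by (rule exI[of _ "[a]"]) (auto simp: perm_of_word_def stp_def transpose_def)
  next
    case (Suc d)
    then obtain ws where ws: "set ws \<subseteq> {a..<a+1+d}" "perm_of_word ws = transpose a (a+1+d)"
      by blast
    have "transpose a (a+1+Suc d) = stp (a+1+d) \<circ> transpose a (a+1+d) \<circ> stp (a+1+d)"
      by (auto simp: stp_def transpose_def)
    also have "\<dots> = perm_of_word ([a+1+d] @ ws @ [a+1+d])"
      by (simp only: perm_of_word_append ws(2)) (simp add: perm_of_word_def comp_assoc)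
    finally show ?case
      using ws(1) by (intro exI[of _ "[a+1+d] @ ws @ [a+1+d]"]) auto
  qed
  then show ?thesis using b by blast
qed

lemma permutation_as_word:
  assumes "bij_betw w {1..n} {1..n}" "\<forall>x. x \<notin> {1..n} \<longrightarrow> w x = x"
  shows "\<exists>ws. set ws \<subseteq> {1..<n} \<and> perm_of_word ws = w"
proof -
  have "w permutes {1..n}"
    using assms by (intro bij_imp_permutes) auto
  from this finite_atLeastAtMost[of 1 n] show ?thesis
  proof (induction rule: permutes_induct)
    case id
    show ?case by (rule exI[of _ "[]"]) (simp add: perm_of_word_def)
  next
    case (swap a b p)
    then obtain ws where ws: "set ws \<subseteq> {1..<n}" "perm_of_word ws = p"
      by blast
    obtain vs where vs: "set vs \<subseteq> {min a b..<max a b}"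
        "perm_of_word vs = transpose (min a b) (max a b)"
      using transpose_as_word[of "min a b" "max a b"] \<open>a \<noteq> b\<close> by (cases "a \<le> b") auto
    have "transpose (min a b) (max a b) = transpose a b"
      by (cases "a \<le> b") (auto simp: transpose_commute min_def max_def)
    moreover have "set vs \<subseteq> {1..<n}"
      using vs(1) swap.hyps(1,2) by (auto simp: subset_iff min_def max_def split: if_splits)
    ultimately show ?case
      using ws vs(2) by (intro exI[of _ "vs @ ws"]) (auto simp: perm_of_word_append)
  qed
qed

lemma reduced_word_exists:
  assumes "bij_betw w {1..n} {1..n}" "\<forall>x. x \<notin> {1..n} \<longrightarrow> w x = x"
  shows "\<exists>ws. reduced_word n w ws"
proof -
  obtain ws where "set ws \<subseteq> {1..<n} \<and> perm_of_word ws = w"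
    using permutation_as_word[OF assms] by blast
  from ex_has_least_nat[of "\<lambda>ws. set ws \<subseteq> {1..<n} \<and> perm_of_word ws = w", OF this, of length]
  show ?thesis unfolding reduced_word_def by blast
qed

lemma AK_Tw_closed:
  assumes "bij_betw w {1..n} {1..n}" "\<forall>x. x \<notin> {1..n} \<longrightarrow> w x = x"
  shows "AK_Tw n r q Q w \<in> carrier (AK n r q Q)"
proof -
  have "reduced_word n w (SOME ws. reduced_word n w ws)"
    using reduced_word_exists[OF assms] by (rule someI_ex)
  then show ?thesis
    unfolding AK_Tw_def reduced_word_def by (intro AK_prod_closed) (auto intro!: AK_T_closed)
qed

lemma AK_x_closed: "AK_x n r q Q mu \<in> carrier (AK n r q Q)"
proof -
  interpret ring "AK n r q Q" by (rule AK_ring)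
  show ?thesis
    unfolding AK_x_def by (rule finsum_closed) (auto simp: young_subgroup_def intro!: AK_Tw_closed)
qed

lemma AK_m_closed: "multicomp r n mu \<Longrightarrow> AK_m n r q Q mu \<in> carrier (AK n r q Q)"
  unfolding AK_m_def by (intro ring.ring_simprules(5)[OF AK_ring] AK_x_closed AK_u_closed)

section \<open>The multicomposition omega\<close>

lemma csize_omega: "t + 1 \<noteq> r \<Longrightarrow> csize (omega r n) t = 0"
  by (simp add: csize_def omega_def)

lemma row_block_omega:
  assumes "1 \<le> r" "1 \<le> x" "x \<le> n"
  shows "row_block (omega r n) (r - 1) (x - 1) = {x}"
proof -
  have "(\<Sum>t<r-1. csize (omega r n) t) = 0"
    using assms by (auto intro!: sum.neutral csize_omega)
  moreover have "(\<Sum>j<x-1. omega r n (r-1) j) = (\<Sum>j<x-1. 1)"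
    using assms by (intro sum.cong) (auto simp: omega_def)
  moreover have "omega r n (r-1) (x-1) = 1"
    using assms by (simp add: omega_def)
  ultimately show ?thesis
    using assms by (simp add: row_block_def Let_def)
qed

lemma young_subgroup_omega:
  assumes "1 \<le> r"
  shows "young_subgroup r n (omega r n) = {id}"
proof
  show "{id} \<subseteq> young_subgroup r n (omega r n)"
    by (simp add: young_subgroup_def)
  show "young_subgroup r n (omega r n) \<subseteq> {id}"
  proof
    fix w assume w: "w \<in> young_subgroup r n (omega r n)"
    have "w x = x" for x
    proof (cases "x \<in> {1..n}")
      case True
      then have "w ` row_block (omega r n) (r - 1) (x - 1) = row_block (omega r n) (r - 1) (x - 1)"
        using w assms by (auto simp: young_subgroup_def)
      then show ?thesis
        using row_block_omega[OF assms, of x n] True by simp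
    next
      case False
      then show ?thesis using w by (simp add: young_subgroup_def)
    qed
    then show "w \<in> {id}" by auto
  qed
qed

lemma AK_Tw_id: "AK_Tw n r q Q id = \<one>\<^bsub>AK n r q Q\<^esub>"
proof -
  have "reduced_word n id []"
    by (simp add: reduced_word_def perm_of_word_def)
  then have "(SOME ws. reduced_word n id ws) = []"
    by (metis (mono_tags) length_0_conv le_zero_eq list.size(3) reduced_word_def someI)
  then show ?thesis
    by (simp add: AK_Tw_def AK_prod_def)
qed

lemma AK_u_omega: "AK_u n r q Q (omega r n) = \<one>\<^bsub>AK n r q Q\<^esub>"
proof -
  have no_factors: "[1..<(\<Sum>t<s - 1. csize (omega r n) t) + 1] = []" if "s \<in> set [2..<r+1]" for s
  proof -
    have "(\<Sum>t<s - 1. csize (omega r n) t) = 0"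
      using that by (intro sum.neutral) (auto simp: csize_omega)
    then show ?thesis by simp
  qed
  show ?thesis
    unfolding AK_u_def AK_prod_def by (simp only: no_factors cong: map_cong) (simp add: map_replicate_const)
qed

lemma AK_m_omega:
  assumes "1 \<le> r"
  shows "AK_m n r q Q (omega r n) = \<one>\<^bsub>AK n r q Q\<^esub>"
proof -
  interpret ring "AK n r q Q" by (rule AK_ring)
  have "AK_x n r q Q (omega r n) = \<one>\<^bsub>AK n r q Q\<^esub>"
    by (simp add: AK_x_def young_subgroup_omega[OF assms] AK_Tw_id)
  then show ?thesis
    by (simp add: AK_m_def AK_u_omega)
qed

lemma AK_permutation_modules_as_cyclic_sum:
  "Msum n r q Q Lam = cyclic_sum (AK n r q Q) Lam (AK_m n r q Q)"
  "Msum_add n r q Q Lam = cyclic_sum_add (AK n r q Q) Lam"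
  "End_Schur n r q Q Lam = cyclic_sum_bicommutant (AK n r q Q) Lam (AK_m n r q Q)"
  "nat_map n r q Q Lam = right_mult_action (AK n r q Q) Lam (AK_m n r q Q)"
  by (simp_all add: fun_eq_iff Msum_def cyclic_sum_def Mperm_def right_principal_def
      Msum_add_def cyclic_sum_add_def Msum_act_def cyclic_sum_act_def End_Schur_def
      cyclic_sum_bicommutant_def Schur_def cyclic_sum_End_def nat_map_def right_mult_action_def)

theorem mainTheorem12:
  fixes q :: "'r::idom" and Q :: "nat \<Rightarrow> 'r" and n r :: nat
    and Lam :: "(nat \<Rightarrow> nat \<Rightarrow> nat) set"
  assumes "q dvd 1" and "1 \<le> r"
    and "finite Lam" and "\<forall>mu\<in>Lam. multicomp r n mu"
    and "omega r n \<in> Lam" and "Lambda_plus r n Lam \<subseteq> Lam"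
  shows "bij_betw (nat_map n r q Q Lam) (carrier (AK n r q Q)) (End_Schur n r q Q Lam)
    \<and> nat_map n r q Q Lam \<one>\<^bsub>AK n r q Q\<^esub> = (\<lambda>x\<in>Msum n r q Q Lam. x)
    \<and> (\<forall>h\<in>carrier (AK n r q Q). \<forall>k\<in>carrier (AK n r q Q).
         nat_map n r q Q Lam (h \<oplus>\<^bsub>AK n r q Q\<^esub> k)
           = (\<lambda>x\<in>Msum n r q Q Lam. Msum_add n r q Q Lam (nat_map n r q Q Lam h x) (nat_map n r q Q Lam k x))
       \<and> nat_map n r q Q Lam (h \<otimes>\<^bsub>AK n r q Q\<^esub> k)
           = compose (Msum n r q Q Lam) (nat_map n r q Q Lam k) (nat_map n r q Q Lam h))"
proof -
  interpret regular_summand "AK n r q Q" Lam "AK_m n r q Q" "omega r n"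
    using assms(2,4,5)
    by (intro regular_summand.intro regular_summand_axioms.intro AK_ring)
      (auto simp: AK_m_closed AK_m_omega)
  show ?thesis
    unfolding AK_permutation_modules_as_cyclic_sum
    using right_mult_action_bij right_mult_action_one right_mult_action_add
      right_mult_action_mult by blast
qed

end
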